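(* Let $k$ be a field of characteristic zero, ${\boldsymbol\lambda}\in M_n(k)$ antisymmetric, and $K=k_{\boldsymbol\lambda}(x_1,\dots,x_n)$. (a) If $B_{\boldsymbol\lambda}$ is the $k$-subspace of $K$ spanned by $\{\{f,g\}: f,g\in K\}$, then $B_{\boldsymbol\lambda}\cap k=\{0\}$. (b) For an $n$-tuple $y=(y_1,\dots,y_n)$ of nonzero elements of $K$, let $C_{\boldsymbol\lambda}(y)$ be the matrix $\big(\{y_i,y_j\}(y_iy_j)^{-1}\big)\in M_n(K)$, and let $C_{\boldsymbol\lambda}=\{C_{\boldsymbol\lambda}(y): y\in(K^\times)^n\}$. Then $C_{\boldsymbol\lambda}\cap M_n(k)=\{A{\boldsymbol\lambda}A^{\mathrm{tr}}: A\in M_n(\mathbb Z)\}$.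
   Context: For antisymmetric ${\boldsymbol\lambda}\in M_n(k)$, $k_{\boldsymbol\lambda}(x_1,\dots,x_n)$ is the rational function field $k(x_1,\dots,x_n)$ with the unique Poisson bracket satisfying $\{x_i,x_j\}=\lambda_{ij}x_ix_j$ for all $i,j$. *)

theory Defs
  imports Main "HOL-Library.Poly_Mapping"
begin

definition mon_eval :: "(nat \<Rightarrow> 'a::comm_ring_1) \<Rightarrow> (nat \<Rightarrow>\<^sub>0 nat) \<Rightarrow> 'a" where
  "mon_eval x m = (\<Prod>i\<in>Poly_Mapping.keys m. x i ^ Poly_Mapping.lookup m i)"

definition poly_eval :: "(nat \<Rightarrow> 'a::comm_ring_1) \<Rightarrow> ((nat \<Rightarrow>\<^sub>0 nat) \<Rightarrow>\<^sub>0 'a) \<Rightarrow> 'a" where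
  "poly_eval x p = (\<Sum>m\<in>Poly_Mapping.keys p. Poly_Mapping.lookup p m * mon_eval x m)"

definition is_poly_over :: "'a::comm_ring_1 set \<Rightarrow> nat \<Rightarrow> ((nat \<Rightarrow>\<^sub>0 nat) \<Rightarrow>\<^sub>0 'a) \<Rightarrow> bool" where
  "is_poly_over F n p \<longleftrightarrow> (\<forall>m. Poly_Mapping.lookup p m \<in> F) \<and> (\<forall>m\<in>Poly_Mapping.keys p. Poly_Mapping.keys m \<subseteq> {..<n})"

definition is_subfield :: "'a::field set \<Rightarrow> bool" where
  "is_subfield F \<longleftrightarrow> 0 \<in> F \<and> 1 \<in> F \<and> (\<forall>a\<in>F. \<forall>b\<in>F. a + b \<in> F \<and> a * b \<in> F)
     \<and> (\<forall>a\<in>F. - a \<in> F \<and> inverse a \<in> F)"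

text \<open>The whole field (UNIV) is the rational function field F(x_0,...,x_{n-1}):
  x_0..x_{n-1} are algebraically independent over the subfield F and every
  element is a quotient of polynomials in them with coefficients in F.\<close>
definition is_rational_function_field :: "'a::field set \<Rightarrow> nat \<Rightarrow> (nat \<Rightarrow> 'a) \<Rightarrow> bool" where
  "is_rational_function_field F n x \<longleftrightarrow> is_subfield F
     \<and> (\<forall>p. is_poly_over F n p \<longrightarrow> poly_eval x p = 0 \<longrightarrow> p = 0)
     \<and> (\<forall>f. \<exists>p q. is_poly_over F n p \<and> is_poly_over F n q \<and> poly_eval x q \<noteq> 0
              \<and> f = poly_eval x p / poly_eval x q)"

definition is_poisson_bracket :: "'a::field set \<Rightarrow> ('a \<Rightarrow> 'a \<Rightarrow> 'a) \<Rightarrow> bool" where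
  "is_poisson_bracket F br \<longleftrightarrow>
     (\<forall>a\<in>F. \<forall>f g h. br (a * f + g) h = a * br f h + br g h)
   \<and> (\<forall>f g. br f g = - br g f)
   \<and> (\<forall>f g h. br (f * g) h = f * br g h + g * br f h)
   \<and> (\<forall>f g h. br f (br g h) + br g (br h f) + br h (br f g) = 0)"

definition is_quantum_torus_bracket ::
  "'a::field set \<Rightarrow> nat \<Rightarrow> (nat \<Rightarrow> nat \<Rightarrow> 'a) \<Rightarrow> (nat \<Rightarrow> 'a) \<Rightarrow> ('a \<Rightarrow> 'a \<Rightarrow> 'a) \<Rightarrow> bool" where
  "is_quantum_torus_bracket F n lam x br \<longleftrightarrow>
     is_rational_function_field F n x \<and> is_poisson_bracket F br
   \<and> (\<forall>i<n. \<forall>j<n. br (x i) (x j) = lam i j * x i * x j)"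

definition bracket_span :: "'a::field set \<Rightarrow> ('a \<Rightarrow> 'a \<Rightarrow> 'a) \<Rightarrow> 'a set" where
  "bracket_span F br = {\<Sum>i<m. c i * br (f i) (g i) | (m::nat) c f g. \<forall>i<m. c i \<in> F}"

text \<open>n x n matrices are functions nat \<Rightarrow> nat \<Rightarrow> _ that vanish outside {..<n}^2.\<close>
definition C_mat :: "nat \<Rightarrow> ('a::field \<Rightarrow> 'a \<Rightarrow> 'a) \<Rightarrow> (nat \<Rightarrow> 'a) \<Rightarrow> nat \<Rightarrow> nat \<Rightarrow> 'a" where
  "C_mat n br y = (\<lambda>i j. if i < n \<and> j < n then br (y i) (y j) / (y i * y j) else 0)"

definition C_set :: "nat \<Rightarrow> ('a::field \<Rightarrow> 'a \<Rightarrow> 'a) \<Rightarrow> (nat \<Rightarrow> nat \<Rightarrow> 'a) set" where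
  "C_set n br = {C_mat n br y | y. \<forall>i<n. y i \<noteq> 0}"

definition congr_int :: "nat \<Rightarrow> (nat \<Rightarrow> nat \<Rightarrow> int) \<Rightarrow> (nat \<Rightarrow> nat \<Rightarrow> 'a::comm_ring_1) \<Rightarrow> nat \<Rightarrow> nat \<Rightarrow> 'a" where
  "congr_int n A lam = (\<lambda>i j. if i < n \<and> j < n
      then (\<Sum>p<n. \<Sum>q<n. of_int (A i p) * lam p q * of_int (A j q)) else 0)"

end

theory Submission
  imports Defs Complex_Main "HOL-Computational_Algebra.Primes" "HOL-Library.Infinite_Set"
    "HOL-Library.Function_Algebras"
begin

text \<open>Order the Laurent monomials x^d by the weight \<Sum> d_i ln p_i, which is additive,
  injective and Archimedean. Every nonzero f factors as c x^e (1 + u) / (1 + v) with u, v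
  Laurent polynomials of positive weight, and every f is approximated by Laurent polynomials
  up to arbitrarily high valuation.

  (b) The log-bracket {f, g} / (f g) is additive in both arguments, so for such factorizations
  of y_i and y_j it equals e_i \<lambda> e_j^T up to terms of positive valuation; if it is a
  constant, these terms vanish.

  (a) Since {x^d, x^e} = (d \<lambda> e^T) x^(d+e) and d \<lambda> d^T = 0, a bracket of Laurent
  polynomials has no constant term. By approximation every bracket is such a polynomial plus
  an element of positive valuation, and no nonzero constant has this form.\<close>

section \<open>Poisson brackets over a subfield\<close>

locale poisson_field =
  fixes F :: "'a::field set" and br :: "'a \<Rightarrow> 'a \<Rightarrow> 'a"
  assumes subfield: "is_subfield F" and poisson: "is_poisson_bracket F br"
begin

lemma zero_in_F [simp]: "0 \<in> F"
  and one_in_F [simp]: "1 \<in> F"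
  and add_in_F [intro]: "a \<in> F \<Longrightarrow> b \<in> F \<Longrightarrow> a + b \<in> F"
  and mult_in_F [intro]: "a \<in> F \<Longrightarrow> b \<in> F \<Longrightarrow> a * b \<in> F"
  and uminus_in_F [intro]: "a \<in> F \<Longrightarrow> - a \<in> F"
  and inverse_in_F [intro]: "a \<in> F \<Longrightarrow> inverse a \<in> F"
  using subfield unfolding is_subfield_def by auto

lemma diff_in_F [intro]: "a \<in> F \<Longrightarrow> b \<in> F \<Longrightarrow> a - b \<in> F"
  by (metis add_in_F uminus_in_F diff_conv_add_uminus)

lemma divide_in_F [intro]: "a \<in> F \<Longrightarrow> b \<in> F \<Longrightarrow> a / b \<in> F"
  by (metis mult_in_F inverse_in_F divide_inverse)

lemma sum_in_F [intro]: "(\<And>i. i \<in> I \<Longrightarrow> f i \<in> F) \<Longrightarrow> sum f I \<in> F"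
  by (induction I rule: infinite_finite_induct) auto

lemma of_int_in_F [intro]: "of_int k \<in> F"
proof -
  have of_nat_in_F: "of_nat m \<in> F" for m
    by (induction m) auto
  have "of_int k = (of_nat (nat k) - of_nat (nat (- k)) :: 'a)"
    by (cases "k \<ge> 0") auto
  then show ?thesis
    using of_nat_in_F by auto
qed

lemma br_linear: "a \<in> F \<Longrightarrow> br (a * f + g) h = a * br f h + br g h"
  and br_antisym: "br f g = - br g f"
  and br_mult_left: "br (f * g) h = f * br g h + g * br f h"
  using poisson unfolding is_poisson_bracket_def by blast+

lemma br_add_left: "br (f + g) h = br f h + br g h"
  using br_linear[of 1 f g h] by simp

lemma br_zero_left [simp]: "br 0 h = 0"
  using br_add_left[of 0 0 h] by (metis add_cancel_right_right add_0)

lemma br_smult_left: "a \<in> F \<Longrightarrow> br (a * f) h = a * br f h"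
  using br_linear[of a f 0 h] by simp

lemma br_const_left:
  assumes "c \<in> F" shows "br c h = 0"
proof -
  have "br 1 h = 0"
    using br_mult_left[of 1 1 h] by (metis add_cancel_right_right mult_1)
  then show ?thesis
    using br_smult_left[OF assms, of 1 h] by simp
qed

lemma br_diff_left: "br (f - g) h = br f h - br g h"
  using br_linear[of "-1" g f h] uminus_in_F[OF one_in_F] by simp

lemma br_zero_right [simp]: "br h 0 = 0"
  using br_antisym[of h 0] by simp

lemma br_add_right: "br h (f + g) = br h f + br h g"
  by (metis br_add_left br_antisym minus_add_distrib)

lemma br_smult_right: "a \<in> F \<Longrightarrow> br h (a * f) = a * br h f"
  by (metis br_smult_left br_antisym mult_minus_right)

lemma br_sum_left: "br (sum f I) h = (\<Sum>i\<in>I. br (f i) h)"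
  by (induction I rule: infinite_finite_induct) (auto simp: br_add_left)

lemma br_sum_right: "br h (sum f I) = (\<Sum>i\<in>I. br h (f i))"
  by (induction I rule: infinite_finite_induct) (auto simp: br_add_right)

lemma br_inverse_left:
  assumes "f \<noteq> 0" shows "br (inverse f) h = - br f h / f\<^sup>2"
proof -
  have "0 = br (f * inverse f) h"
    using assms br_const_left by simp
  also have "\<dots> = f * br (inverse f) h + inverse f * br f h"
    by (rule br_mult_left)
  finally show ?thesis
    using assms by (simp add: field_simps power2_eq_square eq_neg_iff_add_eq_0)
qed

lemma br_divide_left:
  assumes "S \<noteq> 0" shows "br (f / S) h = (S * br f h - f * br S h) / S\<^sup>2"
proof -
  have "br (f / S) h = br (f * inverse S) h"
    by (simp add: divide_inverse)
  also have "\<dots> = f * br (inverse S) h + inverse S * br f h"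
    by (rule br_mult_left)
  also have "\<dots> = (S * br f h - f * br S h) / S\<^sup>2"
    unfolding br_inverse_left[OF assms] using assms by (simp add: field_simps power2_eq_square)
  finally show ?thesis .
qed

lemma br_divide_divide:
  assumes "S1 \<noteq> 0" "S2 \<noteq> 0"
  shows "br (T1 / S1) (T2 / S2) =
    (S1 * S2 * br T1 T2 - S1 * T2 * br T1 S2 - T1 * S2 * br S1 T2 + T1 * T2 * br S1 S2)
      / (S1\<^sup>2 * S2\<^sup>2)"
proof -
  have right: "br g (T2 / S2) = (S2 * br g T2 - T2 * br g S2) / S2\<^sup>2" for g
    unfolding br_antisym[of g] br_divide_left[OF assms(2)]
    by (simp add: minus_divide_left algebra_simps)
  show ?thesis
    using assms unfolding br_divide_left[OF assms(1)] right
    by (simp add: br_diff_left br_smult_left field_simps power2_eq_square)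
qed

definition logbr :: "'a \<Rightarrow> 'a \<Rightarrow> 'a" where
  "logbr f g = br f g / (f * g)"

lemma logbr_antisym: "logbr f g = - logbr g f"
  unfolding logbr_def by (subst br_antisym) (simp add: mult.commute)

lemma logbr_mult_left:
  "f1 \<noteq> 0 \<Longrightarrow> f2 \<noteq> 0 \<Longrightarrow> g \<noteq> 0 \<Longrightarrow> logbr (f1 * f2) g = logbr f1 g + logbr f2 g"
  unfolding logbr_def by (simp add: br_mult_left field_simps)

lemma logbr_mult_right:
  "f1 \<noteq> 0 \<Longrightarrow> f2 \<noteq> 0 \<Longrightarrow> g \<noteq> 0 \<Longrightarrow> logbr g (f1 * f2) = logbr g f1 + logbr g f2"
  by (metis logbr_antisym logbr_mult_left minus_add_distrib)

lemma logbr_inverse_left: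
  assumes "f \<noteq> 0" shows "logbr (inverse f) g = - logbr f g"
  using assms unfolding logbr_def br_inverse_left[OF assms]
  by (simp add: field_simps power2_eq_square)

lemma logbr_divide_left:
  "f1 \<noteq> 0 \<Longrightarrow> f2 \<noteq> 0 \<Longrightarrow> g \<noteq> 0 \<Longrightarrow> logbr (f1 / f2) g = logbr f1 g - logbr f2 g"
  by (simp add: divide_inverse logbr_mult_left logbr_inverse_left)

lemma logbr_divide_right:
  "f1 \<noteq> 0 \<Longrightarrow> f2 \<noteq> 0 \<Longrightarrow> g \<noteq> 0 \<Longrightarrow> logbr g (f1 / f2) = logbr g f1 - logbr g f2"
  by (metis logbr_antisym logbr_divide_left minus_diff_eq minus_diff_minus)

lemma logbr_const_left: "c \<in> F \<Longrightarrow> logbr c g = 0"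
  unfolding logbr_def by (simp add: br_const_left)

lemma logbr_const_right: "c \<in> F \<Longrightarrow> logbr g c = 0"
  by (metis logbr_antisym logbr_const_left neg_equal_0_iff_equal)

lemma logbr_power_int_left:
  assumes "f \<noteq> 0" "g \<noteq> 0" shows "logbr (f powi k) g = of_int k * logbr f g"
proof -
  have power: "logbr (f ^ m) g = of_nat m * logbr f g" for m
    using assms by (induction m) (simp_all add: logbr_mult_left logbr_const_left algebra_simps)
  show ?thesis
  proof (cases "k \<ge> 0")
    case True
    then show ?thesis
      using power[of "nat k"] by (simp add: power_int_def)
  next
    case False
    then have "f powi k = inverse (f ^ nat (- k))"
      by (simp add: power_int_def power_inverse)
    then show ?thesis
      using power[of "nat (- k)"] assms False by (simp add: logbr_inverse_left)
  qed
qed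

lemma logbr_prod_left:
  "(\<And>i. i \<in> I \<Longrightarrow> f i \<noteq> 0) \<Longrightarrow> g \<noteq> 0 \<Longrightarrow> logbr (prod f I) g = (\<Sum>i\<in>I. logbr (f i) g)"
  by (induction I rule: infinite_finite_induct) (simp_all add: logbr_mult_left logbr_const_left)

end

section \<open>An Archimedean monomial order\<close>

definition int_vecs :: "nat \<Rightarrow> (nat \<Rightarrow> int) set" where
  "int_vecs n = {a. \<forall>i\<ge>n. a i = 0}"

lemma int_vecs_add [intro]: "a \<in> int_vecs n \<Longrightarrow> b \<in> int_vecs n \<Longrightarrow> a + b \<in> int_vecs n"
  and int_vecs_uminus [intro]: "a \<in> int_vecs n \<Longrightarrow> - a \<in> int_vecs n"
  and int_vecs_diff [intro]: "a \<in> int_vecs n \<Longrightarrow> b \<in> int_vecs n \<Longrightarrow> a - b \<in> int_vecs n"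
  and int_vecs_zero [simp]: "0 \<in> int_vecs n"
  unfolding int_vecs_def by auto

definition nth_prime :: "nat \<Rightarrow> nat" where
  "nth_prime = enumerate {p. prime p}"

lemma prime_nth_prime: "prime (nth_prime i)"
  unfolding nth_prime_def using enumerate_in_set[OF primes_infinite] by simp

lemma inj_nth_prime: "inj nth_prime"
  unfolding nth_prime_def using strict_mono_enumerate[OF primes_infinite] by (rule strict_mono_imp_inj_on)

lemma multiplicity_nth_prime_prod:
  assumes "finite I"
  shows "multiplicity (nth_prime j) (\<Prod>i\<in>I. nth_prime i ^ e i) = (if j \<in> I then e j else 0)"
proof -
  have nonzero: "nth_prime i \<noteq> 0" for i
    using prime_nth_prime by (metis not_prime_0)
  have single: "multiplicity (nth_prime j) (nth_prime i) = (if i = j then 1 else 0)" for i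
    using prime_nth_prime inj_eq[OF inj_nth_prime]
    by (simp add: prime_multiplicity_other prime_imp_prime_elem)
  have "multiplicity (nth_prime j) (\<Prod>i\<in>I. nth_prime i ^ e i) =
      (\<Sum>i\<in>I. multiplicity (nth_prime j) (nth_prime i ^ e i))"
    using assms nonzero prime_nth_prime
    by (intro prime_elem_multiplicity_prod_distrib) (auto simp: prime_imp_prime_elem nonzero)
  also have "\<dots> = (\<Sum>i\<in>I. e i * multiplicity (nth_prime j) (nth_prime i))"
    using nonzero prime_nth_prime
    by (intro sum.cong refl prime_elem_multiplicity_power_distrib) (auto simp: prime_imp_prime_elem)
  finally show ?thesis
    using assms by (simp add: single if_distrib cong: if_cong)
qed

text \<open>By unique factorization, weighting coordinate i with ln p_i embeds Z^n additively and
  injectively into the reals.\<close>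

definition prime_weight :: "nat \<Rightarrow> (nat \<Rightarrow> int) \<Rightarrow> real" where
  "prime_weight n a = (\<Sum>i<n. of_int (a i) * ln (nth_prime i))"

lemma prime_weight_add: "prime_weight n (a + b) = prime_weight n a + prime_weight n b"
  and prime_weight_uminus: "prime_weight n (- a) = - prime_weight n a"
  and prime_weight_diff: "prime_weight n (a - b) = prime_weight n a - prime_weight n b"
  and prime_weight_zero [simp]: "prime_weight n 0 = 0"
  unfolding prime_weight_def by (simp_all add: sum.distrib sum_negf sum_subtractf algebra_simps)

lemma prime_weight_eq_0_iff:
  assumes "a \<in> int_vecs n" shows "prime_weight n a = 0 \<longleftrightarrow> a = 0"
proof
  assume weight: "prime_weight n a = 0"
  define N where "N a = (\<Prod>i<n. nth_prime i ^ nat (a i))" for a :: "nat \<Rightarrow> int"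
  have N_pos: "0 < N b" for b
    unfolding N_def using prime_nth_prime prime_gt_0_nat by (simp add: prod_pos)
  have ln_N: "ln (real (N b)) = (\<Sum>i<n. real (nat (b i)) * ln (nth_prime i))" for b
    unfolding N_def using prime_nth_prime prime_gt_0_nat by (simp add: ln_prod ln_realpow)
  have nat_diff: "real (nat k) - real (nat (- k)) = of_int k" for k :: int
    by (cases "k \<ge> 0") auto
  have "ln (real (N a)) - ln (real (N (- a))) = prime_weight n a"
    unfolding ln_N prime_weight_def sum_subtractf[symmetric] left_diff_distrib[symmetric]
    by (simp add: nat_diff)
  then have "N a = N (- a)"
    using weight N_pos by simp
  then have same: "nat (a j) = nat (- a j)" if "j < n" for j
    using multiplicity_nth_prime_prod[of "{..<n}" j "\<lambda>i. nat (a i)"]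
      multiplicity_nth_prime_prod[of "{..<n}" j "\<lambda>i. nat (- a i)"] that
    unfolding N_def by simp
  have "a j = 0" for j
  proof (cases "j < n")
    case True
    then show ?thesis
      using same[of j] by arith
  next
    case False
    then show ?thesis
      using assms unfolding int_vecs_def by simp
  qed
  then show "a = 0"
    by auto
qed simp

lemma prime_weight_inj:
  "a \<in> int_vecs n \<Longrightarrow> b \<in> int_vecs n \<Longrightarrow> prime_weight n a = prime_weight n b \<Longrightarrow> a = b"
  by (metis prime_weight_eq_0_iff int_vecs_diff prime_weight_diff right_minus_eq)

section \<open>Laurent polynomials in the generators\<close>

locale quantum_torus =
  fixes F :: "'a::field_char_0 set" and n :: nat and lam :: "nat \<Rightarrow> nat \<Rightarrow> 'a"
    and x :: "nat \<Rightarrow> 'a" and br :: "'a \<Rightarrow> 'a \<Rightarrow> 'a"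
  assumes lam_in_F: "\<forall>i<n. \<forall>j<n. lam i j \<in> F"
    and lam_antisym: "\<forall>i<n. \<forall>j<n. lam j i = - lam i j"
    and quantum_torus: "is_quantum_torus_bracket F n lam x br"
begin

sublocale poisson_field F br
  using quantum_torus unfolding is_quantum_torus_bracket_def is_rational_function_field_def
  by unfold_locales blast+

lemma algebraically_independent: "is_poly_over F n p \<Longrightarrow> poly_eval x p = 0 \<Longrightarrow> p = 0"
  and quotient_of_polys: "\<exists>p q. is_poly_over F n p \<and> is_poly_over F n q \<and> poly_eval x q \<noteq> 0
     \<and> f = poly_eval x p / poly_eval x q"
  and br_x: "i < n \<Longrightarrow> j < n \<Longrightarrow> br (x i) (x j) = lam i j * x i * x j"
  using quantum_torus unfolding is_quantum_torus_bracket_def is_rational_function_field_def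
  by blast+

lemma poly_eval_single: "poly_eval x (Poly_Mapping.single m c) = c * mon_eval x m"
  unfolding poly_eval_def by simp

lemma poly_eval_sum: "poly_eval x (sum p I) = (\<Sum>i\<in>I. poly_eval x (p i))"
proof (induction I rule: infinite_finite_induct)
  case (insert i I)
  have add: "poly_eval x (p + q) = poly_eval x p + poly_eval x q" for p q
  proof -
    let ?A = "Poly_Mapping.keys p \<union> Poly_Mapping.keys q"
    have eval: "Poly_Mapping.keys r \<subseteq> ?A \<Longrightarrow>
        poly_eval x r = (\<Sum>m\<in>?A. Poly_Mapping.lookup r m * mon_eval x m)" for r
      unfolding poly_eval_def by (rule sum.mono_neutral_left) (auto simp: in_keys_iff)
    show ?thesis
      using eval[OF keys_add] eval[of p] eval[of q] by (simp add: lookup_add distrib_right sum.distrib)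
  qed
  show ?case
    using insert by (simp add: add)
qed (simp_all add: poly_eval_def)

lemma x_nonzero: "i < n \<Longrightarrow> x i \<noteq> 0"
proof
  assume "i < n" "x i = 0"
  let ?p = "Poly_Mapping.single (Poly_Mapping.single i (1::nat)) (1::'a)"
  have "is_poly_over F n ?p"
    using \<open>i < n\<close> unfolding is_poly_over_def by (auto simp: lookup_single when_def)
  moreover have "poly_eval x ?p = 0"
    using \<open>x i = 0\<close> by (simp add: poly_eval_single mon_eval_def)
  ultimately have "?p = 0"
    by (rule algebraically_independent)
  then show False
    by (metis lookup_single_eq zero_neq_one lookup_zero)
qed

definition monom :: "(nat \<Rightarrow> int) \<Rightarrow> 'a" where
  "monom a = (\<Prod>i<n. x i powi a i)"

lemma monom_add: "monom (a + b) = monom a * monom b"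
  unfolding monom_def by (simp add: power_int_add x_nonzero prod.distrib)

lemma monom_zero [simp]: "monom 0 = 1"
  unfolding monom_def by simp

lemma monom_nonzero [simp]: "monom a \<noteq> 0"
  unfolding monom_def by (simp add: x_nonzero)

lemma monom_uminus: "monom (- a) = inverse (monom a)"
  using monom_add[of "- a" a] by (simp add: field_simps)

lemma monom_diff: "monom (a - b) = monom a / monom b"
  using monom_add[of a "- b"] by (simp add: monom_uminus divide_inverse)

definition lam_form :: "(nat \<Rightarrow> int) \<Rightarrow> (nat \<Rightarrow> int) \<Rightarrow> 'a" where
  "lam_form a b = (\<Sum>p<n. \<Sum>q<n. of_int (a p) * lam p q * of_int (b q))"

lemma lam_form_in_F [intro]: "lam_form a b \<in> F"
  unfolding lam_form_def using lam_in_F by (auto intro!: sum_in_F mult_in_F)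

lemma lam_form_uminus_right: "lam_form a (- b) = - lam_form a b"
  unfolding lam_form_def by (simp add: sum_negf)

lemma lam_form_self: "lam_form a a = 0"
proof -
  \<comment> \<open>x = - x forces x = 0 only in characteristic \<noteq> 2.\<close>
  have "lam_form a a = (\<Sum>q<n. \<Sum>p<n. of_int (a p) * lam p q * of_int (a q))"
    unfolding lam_form_def by (rule sum.swap)
  also have "\<dots> = - lam_form a a"
    unfolding lam_form_def sum_negf[symmetric]
  proof (intro sum.cong refl)
    fix p q assume "p \<in> {..<n}" "q \<in> {..<n}"
    then show "of_int (a q) * lam q p * of_int (a p) = - (of_int (a p) * lam p q * of_int (a q))"
      using lam_antisym[rule_format, of p q] by simp
  qed
  finally show ?thesis
    by simp
qed

lemma logbr_monom_left: "g \<noteq> 0 \<Longrightarrow> logbr (monom a) g = (\<Sum>p<n. of_int (a p) * logbr (x p) g)"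
  unfolding monom_def
  by (subst logbr_prod_left) (simp_all add: logbr_power_int_left x_nonzero power_int_eq_0_iff)

lemma logbr_monom: "logbr (monom a) (monom b) = lam_form a b"
proof -
  have "logbr (x p) (monom b) = (\<Sum>q<n. lam p q * of_int (b q))" if "p < n" for p
  proof -
    have "logbr (x p) (monom b) = - (\<Sum>q<n. of_int (b q) * logbr (x q) (x p))"
      using that x_nonzero by (subst logbr_antisym) (simp add: logbr_monom_left)
    also have "\<dots> = (\<Sum>q<n. lam p q * of_int (b q))"
      unfolding sum_negf[symmetric]
    proof (intro sum.cong refl)
      fix q assume "q \<in> {..<n}"
      then show "- (of_int (b q) * logbr (x q) (x p)) = lam p q * of_int (b q)"
        using that lam_antisym[rule_format, of p q] x_nonzero by (simp add: logbr_def br_x)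
    qed
    finally show ?thesis .
  qed
  then show ?thesis
    by (simp add: logbr_monom_left lam_form_def sum_distrib_left algebra_simps)
qed

lemma br_monom: "br (monom a) (monom b) = lam_form a b * monom (a + b)"
  using logbr_monom[of a b] unfolding logbr_def by (simp add: monom_add field_simps)

abbreviation weight :: "(nat \<Rightarrow> int) \<Rightarrow> real" where
  "weight \<equiv> prime_weight n"

definition laurent :: "((nat \<Rightarrow> int) \<Rightarrow> bool) \<Rightarrow> 'a set" where
  "laurent P = {\<Sum>d\<in>S. C d * monom d | S C.
     finite S \<and> (\<forall>d\<in>S. d \<in> int_vecs n \<and> P d \<and> C d \<in> F)}"

lemma laurentI:
  "finite S \<Longrightarrow> (\<And>d. d \<in> S \<Longrightarrow> d \<in> int_vecs n \<and> P d \<and> C d \<in> F) \<Longrightarrow>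
    (\<Sum>d\<in>S. C d * monom d) \<in> laurent P"
  unfolding laurent_def by blast

lemma laurentE:
  assumes "h \<in> laurent P"
  obtains S C where "finite S" "\<forall>d\<in>S. d \<in> int_vecs n \<and> P d \<and> C d \<in> F"
    "h = (\<Sum>d\<in>S. C d * monom d)"
  using assms unfolding laurent_def by blast

lemma laurent_zero [simp]: "0 \<in> laurent P"
  using laurentI[of "{}" P] by simp

lemma laurent_monom: "c \<in> F \<Longrightarrow> d \<in> int_vecs n \<Longrightarrow> P d \<Longrightarrow> c * monom d \<in> laurent P"
  using laurentI[of "{d}" P "\<lambda>_. c"] by simp

lemma laurent_one: "P 0 \<Longrightarrow> 1 \<in> laurent P"
  using laurent_monom[of 1 0 P] by simp

lemma laurent_mono: "h \<in> laurent P \<Longrightarrow> (\<And>d. d \<in> int_vecs n \<Longrightarrow> P d \<Longrightarrow> Q d) \<Longrightarrow> h \<in> laurent Q"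
  unfolding laurent_def by blast

lemma laurent_add:
  assumes "h1 \<in> laurent P" "h2 \<in> laurent P"
  shows "h1 + h2 \<in> laurent P"
proof -
  obtain S C where S: "finite S" "\<forall>d\<in>S. d \<in> int_vecs n \<and> P d \<and> C d \<in> F"
    "h1 = (\<Sum>d\<in>S. C d * monom d)"
    using assms(1) by (rule laurentE)
  obtain T E where T: "finite T" "\<forall>d\<in>T. d \<in> int_vecs n \<and> P d \<and> E d \<in> F"
    "h2 = (\<Sum>d\<in>T. E d * monom d)"
    using assms(2) by (rule laurentE)
  define G where "G d = (if d \<in> S then C d else 0) + (if d \<in> T then E d else 0)" for d
  have "h1 + h2 = (\<Sum>d\<in>S \<union> T. (if d \<in> S then C d * monom d else 0)
      + (if d \<in> T then E d * monom d else 0))"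
    using S T sum.inter_restrict[of "S \<union> T" "\<lambda>d. C d * monom d" S]
      sum.inter_restrict[of "S \<union> T" "\<lambda>d. E d * monom d" T]
    by (simp add: sum.distrib Int_absorb1 Int_absorb2)
  also have "\<dots> = (\<Sum>d\<in>S \<union> T. G d * monom d)"
    by (intro sum.cong refl) (simp add: G_def distrib_right)
  finally have "h1 + h2 = (\<Sum>d\<in>S \<union> T. G d * monom d)" .
  then show ?thesis
    using S T by (auto simp: G_def intro!: laurentI)
qed

lemma laurent_sum: "(\<And>i. i \<in> I \<Longrightarrow> f i \<in> laurent P) \<Longrightarrow> sum f I \<in> laurent P"
  by (induction I rule: infinite_finite_induct) (auto intro: laurent_add)

lemma laurent_smult:
  assumes "h \<in> laurent P" "c \<in> F" shows "c * h \<in> laurent P"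
proof -
  obtain S C where S: "finite S" "\<forall>d\<in>S. d \<in> int_vecs n \<and> P d \<and> C d \<in> F"
    "h = (\<Sum>d\<in>S. C d * monom d)"
    using assms(1) by (rule laurentE)
  have "c * h = (\<Sum>d\<in>S. (c * C d) * monom d)"
    using S by (simp add: sum_distrib_left mult.assoc)
  then show ?thesis
    using S assms(2) by (auto intro!: laurentI)
qed

lemma laurent_uminus: "h \<in> laurent P \<Longrightarrow> - h \<in> laurent P"
  using laurent_smult[of h P "-1"] uminus_in_F[OF one_in_F] by simp

lemma laurent_diff: "h1 \<in> laurent P \<Longrightarrow> h2 \<in> laurent P \<Longrightarrow> h1 - h2 \<in> laurent P"
  using laurent_add[of h1 P "- h2"] laurent_uminus by simp

lemma laurent_mult:
  assumes "h1 \<in> laurent P1" "h2 \<in> laurent P2"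
    and "\<And>d e. d \<in> int_vecs n \<Longrightarrow> e \<in> int_vecs n \<Longrightarrow> P1 d \<Longrightarrow> P2 e \<Longrightarrow> P3 (d + e)"
  shows "h1 * h2 \<in> laurent P3"
proof -
  obtain S C where S: "finite S" "\<forall>d\<in>S. d \<in> int_vecs n \<and> P1 d \<and> C d \<in> F"
    "h1 = (\<Sum>d\<in>S. C d * monom d)"
    using assms(1) by (rule laurentE)
  obtain T E where T: "finite T" "\<forall>d\<in>T. d \<in> int_vecs n \<and> P2 d \<and> E d \<in> F"
    "h2 = (\<Sum>d\<in>T. E d * monom d)"
    using assms(2) by (rule laurentE)
  have "h1 * h2 = (\<Sum>d\<in>S. \<Sum>e\<in>T. (C d * E e) * monom (d + e))"
    unfolding S(3) T(3) sum_product by (simp add: monom_add algebra_simps)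
  also have "\<dots> \<in> laurent P3"
    using S T assms(3) by (intro laurent_sum laurent_monom) auto
  finally show ?thesis .
qed

lemma laurent_br:
  assumes "h1 \<in> laurent P1" "h2 \<in> laurent P2"
    and "\<And>d e. d \<in> int_vecs n \<Longrightarrow> e \<in> int_vecs n \<Longrightarrow> P1 d \<Longrightarrow> P2 e \<Longrightarrow> lam_form d e \<noteq> 0 \<Longrightarrow>
      P3 (d + e)"
  shows "br h1 h2 \<in> laurent P3"
proof -
  obtain S C where S: "finite S" "\<forall>d\<in>S. d \<in> int_vecs n \<and> P1 d \<and> C d \<in> F"
    "h1 = (\<Sum>d\<in>S. C d * monom d)"
    using assms(1) by (rule laurentE)
  obtain T E where T: "finite T" "\<forall>d\<in>T. d \<in> int_vecs n \<and> P2 d \<and> E d \<in> F"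
    "h2 = (\<Sum>d\<in>T. E d * monom d)"
    using assms(2) by (rule laurentE)
  have "br h1 h2 = (\<Sum>d\<in>S. \<Sum>e\<in>T. br (C d * monom d) (E e * monom e))"
    unfolding S(3) T(3) br_sum_left br_sum_right by (rule sum.swap)
  also have "\<dots> = (\<Sum>d\<in>S. \<Sum>e\<in>T. (C d * E e * lam_form d e) * monom (d + e))"
    using S T by (intro sum.cong refl) (simp add: br_smult_left br_smult_right br_monom)
  also have "\<dots> \<in> laurent P3"
  proof (intro laurent_sum)
    fix d e assume "d \<in> S" "e \<in> T"
    then show "C d * E e * lam_form d e * monom (d + e) \<in> laurent P3"
      using S T assms(3) by (cases "lam_form d e = 0") (auto intro!: laurent_monom)
  qed
  finally show ?thesis .
qed

lemma mon_eval_eq_monom: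
  assumes "Poly_Mapping.keys m \<subseteq> {..<n}"
  shows "mon_eval x m = monom (\<lambda>i. int (Poly_Mapping.lookup m i))"
  unfolding mon_eval_def monom_def power_int_of_nat
  using assms by (intro prod.mono_neutral_left) (auto simp: in_keys_iff)

lemma poly_eval_in_laurent:
  assumes "is_poly_over F n p" shows "poly_eval x p \<in> laurent (\<lambda>_. True)"
  unfolding poly_eval_def
proof (intro laurent_sum)
  fix m assume "m \<in> Poly_Mapping.keys p"
  then have keys: "Poly_Mapping.keys m \<subseteq> {..<n}" and coeff: "Poly_Mapping.lookup p m \<in> F"
    using assms unfolding is_poly_over_def by blast+
  have "(\<lambda>i. int (Poly_Mapping.lookup m i)) \<in> int_vecs n"
    using keys unfolding int_vecs_def by (auto simp: in_keys_iff)
  then show "Poly_Mapping.lookup p m * mon_eval x m \<in> laurent (\<lambda>_. True)"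
    using coeff keys by (simp add: mon_eval_eq_monom laurent_monom)
qed

lemma quotient_of_laurent:
  "\<exists>P R. P \<in> laurent (\<lambda>_. True) \<and> R \<in> laurent (\<lambda>_. True) \<and> R \<noteq> 0 \<and> f = P / R"
  using quotient_of_polys[of f] poly_eval_in_laurent by blast

definition exps_pm :: "(nat \<Rightarrow> int) \<Rightarrow> (nat \<Rightarrow>\<^sub>0 nat)" where
  "exps_pm a = Abs_poly_mapping (\<lambda>i. if i < n then nat (a i) else 0)"

lemma lookup_exps_pm: "Poly_Mapping.lookup (exps_pm a) = (\<lambda>i. if i < n then nat (a i) else 0)"
proof -
  have "finite {i. (if i < n then nat (a i) else 0) \<noteq> 0}"
    by (rule finite_subset[of _ "{..<n}"]) (auto split: if_splits)
  then show ?thesis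
    unfolding exps_pm_def by simp
qed

lemma keys_exps_pm: "Poly_Mapping.keys (exps_pm a) \<subseteq> {..<n}"
  by (auto simp: in_keys_iff lookup_exps_pm split: if_splits)

lemma mon_eval_exps_pm:
  assumes "\<forall>i<n. 0 \<le> a i" shows "mon_eval x (exps_pm a) = monom a"
proof -
  have "(\<lambda>i. int (Poly_Mapping.lookup (exps_pm a) i)) i = a i" if "i < n" for i
    using assms that by (simp add: lookup_exps_pm)
  then show ?thesis
    unfolding mon_eval_eq_monom[OF keys_exps_pm] monom_def by (intro prod.cong) auto
qed

lemma exps_pm_inj:
  assumes "a \<in> int_vecs n" "b \<in> int_vecs n" "\<forall>i<n. 0 \<le> a i" "\<forall>i<n. 0 \<le> b i"
    and "exps_pm a = exps_pm b"
  shows "a = b"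
proof
  fix i
  show "a i = b i"
  proof (cases "i < n")
    case True
    then have "nat (a i) = nat (b i)"
      using arg_cong[OF assms(5), of "\<lambda>m. Poly_Mapping.lookup m i"] by (simp add: lookup_exps_pm)
    then show ?thesis
      using assms(3,4) True by (metis nat_0_le)
  next
    case False
    then show ?thesis
      using assms(1,2) unfolding int_vecs_def by simp
  qed
qed

lemma laurent_coeff_eq_0_nonneg:
  assumes S: "finite S" "\<forall>d\<in>S. d \<in> int_vecs n \<and> (\<forall>i<n. 0 \<le> d i) \<and> C d \<in> F"
    and zero: "(\<Sum>d\<in>S. C d * monom d) = 0" and "d0 \<in> S"
  shows "C d0 = 0"
proof -
  have inj: "inj_on exps_pm S"
    using S(2) by (intro inj_onI exps_pm_inj) auto
  define p where "p = (\<Sum>d\<in>S. Poly_Mapping.single (exps_pm d) (C d))"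
  have "poly_eval x p = (\<Sum>d\<in>S. C d * monom d)"
    unfolding p_def poly_eval_sum poly_eval_single
    using S(2) by (intro sum.cong refl) (simp add: mon_eval_exps_pm)
  then have "poly_eval x p = 0"
    using zero by simp
  moreover have "is_poly_over F n p"
    unfolding p_def is_poly_over_def
  proof (intro conjI allI ballI)
    fix m
    show "Poly_Mapping.lookup (\<Sum>d\<in>S. Poly_Mapping.single (exps_pm d) (C d)) m \<in> F"
      using S by (auto simp: lookup_sum lookup_single when_def intro!: sum_in_F)
  next
    fix m assume "m \<in> Poly_Mapping.keys (\<Sum>d\<in>S. Poly_Mapping.single (exps_pm d) (C d))"
    then show "Poly_Mapping.keys m \<subseteq> {..<n}"
      using keys_sum keys_single keys_exps_pm by (fastforce split: if_splits)
  qed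
  ultimately have "p = 0"
    by (simp add: algebraically_independent)
  then have "0 = Poly_Mapping.lookup p (exps_pm d0)"
    by simp
  also have "\<dots> = (\<Sum>d\<in>S. if d = d0 then C d else 0)"
    unfolding p_def lookup_sum lookup_single when_def using inj \<open>d0 \<in> S\<close>
    by (intro sum.cong refl) (auto dest: inj_onD)
  also have "\<dots> = C d0"
    using S(1) \<open>d0 \<in> S\<close> by simp
  finally show ?thesis
    by simp
qed

text \<open>Multiplying by a monomial that clears all negative exponents reduces the linear
  independence of the Laurent monomials to the algebraic independence of the x_i.\<close>

lemma laurent_coeff_eq_0:
  assumes S: "finite S" "\<forall>d\<in>S. d \<in> int_vecs n \<and> C d \<in> F"
    and zero: "(\<Sum>d\<in>S. C d * monom d) = 0" and "d0 \<in> S"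
  shows "C d0 = 0"
proof -
  define s where "s i = (\<Sum>d\<in>S. \<bar>d i\<bar>)" for i
  have s: "s \<in> int_vecs n"
    using S unfolding s_def int_vecs_def by (auto intro!: sum.neutral)
  have nonneg: "0 \<le> (d + s) i" if "d \<in> S" for d i
  proof -
    have "\<bar>d i\<bar> \<le> s i"
      unfolding s_def using that S(1) by (intro member_le_sum) auto
    then show ?thesis
      by simp
  qed
  let ?S = "(\<lambda>d. d + s) ` S"
  have "(\<Sum>d\<in>?S. C (d - s) * monom d) = (\<Sum>d\<in>S. C d * monom (d + s))"
    by (simp add: sum.reindex inj_on_def)
  also have "\<dots> = monom s * (\<Sum>d\<in>S. C d * monom d)"
    by (simp add: sum_distrib_left monom_add mult.commute mult.left_commute)
  finally have "(\<Sum>d\<in>?S. C (d - s) * monom d) = 0"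
    using zero by simp
  moreover have "\<forall>d\<in>?S. d \<in> int_vecs n \<and> (\<forall>i<n. 0 \<le> d i) \<and> C (d - s) \<in> F"
    using S(2) s nonneg by auto
  ultimately have "C ((d0 + s) - s) = 0"
    using S(1) \<open>d0 \<in> S\<close> laurent_coeff_eq_0_nonneg[of ?S "\<lambda>d. C (d - s)" "d0 + s"] by auto
  then show ?thesis
    by simp
qed

abbreviation pos_laurent :: "'a set" where
  "pos_laurent \<equiv> laurent (\<lambda>d. 0 < weight d)"

lemma one_plus_pos_laurent_nonzero:
  assumes "u \<in> pos_laurent" shows "1 + u \<noteq> 0"
proof
  assume zero: "1 + u = 0"
  obtain S C where S: "finite S" "\<forall>d\<in>S. d \<in> int_vecs n \<and> 0 < weight d \<and> C d \<in> F"
    "u = (\<Sum>d\<in>S. C d * monom d)"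
    using assms by (rule laurentE)
  have "0 \<notin> S"
    using S by auto
  then have "(\<Sum>d\<in>insert 0 S. (C(0 := 1)) d * monom d) = 1 + u"
    using S(1,3) by (simp add: sum.insert) (intro sum.cong refl, auto)
  moreover have "\<forall>d\<in>insert 0 S. d \<in> int_vecs n \<and> (C(0 := 1)) d \<in> F"
    using S(2) by auto
  ultimately have "(C(0 := 1)) 0 = 0"
    using zero S(1) laurent_coeff_eq_0[of "insert 0 S" "C(0 := 1)" 0] by simp
  then show False
    by simp
qed

lemma one_plus_pos_laurent: "u \<in> pos_laurent \<Longrightarrow> 1 + u \<in> laurent (\<lambda>d. 0 \<le> weight d)"
  by (intro laurent_add laurent_one) (auto elim: laurent_mono)

lemma pos_laurent_mult_one_plus:
  assumes "u \<in> pos_laurent" "v \<in> pos_laurent"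
  shows "\<exists>w\<in>pos_laurent. (1 + u) * (1 + v) = 1 + w"
proof
  have "u * v \<in> pos_laurent"
    using assms by (rule laurent_mult) (simp add: prime_weight_add)
  then show "u + v + u * v \<in> pos_laurent"
    using assms by (intro laurent_add)
qed (simp add: algebra_simps)

lemma laurent_lead_term:
  assumes S: "finite S" "\<forall>d\<in>S. d \<in> int_vecs n \<and> C d \<in> F" and "d0 \<in> S" "C d0 \<noteq> 0"
  shows "\<exists>e\<in>S. C e \<noteq> 0 \<and> (\<forall>d\<in>S. C d \<noteq> 0 \<longrightarrow> weight e \<le> weight d) \<and>
     (\<exists>u\<in>pos_laurent. (\<Sum>d\<in>S. C d * monom d) = C e * monom e * (1 + u))"
proof -
  define S' where "S' = {d\<in>S. C d \<noteq> 0}"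
  have "finite S'" "S' \<noteq> {}"
    using assms unfolding S'_def by auto
  then have "Min (weight ` S') \<in> weight ` S'"
    by (intro Min_in) auto
  then obtain e where "e \<in> S'" "weight e = Min (weight ` S')"
    by auto
  then have e_min: "\<forall>d\<in>S'. weight e \<le> weight d"
    using \<open>finite S'\<close> by simp
  have e: "e \<in> S" "C e \<noteq> 0" "e \<in> int_vecs n" "C e \<in> F"
    using S \<open>e \<in> S'\<close> unfolding S'_def by auto
  define u where "u = (\<Sum>d\<in>S' - {e}. (C d / C e) * monom (d - e))"
  have "(\<Sum>d\<in>S. C d * monom d) = (\<Sum>d\<in>S'. C d * monom d)"
    unfolding S'_def using S(1) by (intro sum.mono_neutral_right) auto
  also have "\<dots> = C e * monom e + (\<Sum>d\<in>S' - {e}. C e * monom e * ((C d / C e) * monom (d - e)))"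
    using \<open>finite S'\<close> \<open>e \<in> S'\<close> e(2) by (simp add: sum.remove monom_diff)
  also have "\<dots> = C e * monom e * (1 + u)"
    unfolding u_def by (simp add: distrib_left sum_distrib_left)
  finally have "(\<Sum>d\<in>S. C d * monom d) = C e * monom e * (1 + u)" .
  moreover have "u \<in> pos_laurent"
    unfolding u_def
  proof (intro laurent_sum laurent_monom)
    fix d assume d: "d \<in> S' - {e}"
    then have "d \<in> int_vecs n" "C d \<in> F"
      using S unfolding S'_def by auto
    then show "C d / C e \<in> F" "d - e \<in> int_vecs n"
      using e by auto
    have "weight d \<noteq> weight e"
      using d prime_weight_inj \<open>d \<in> int_vecs n\<close> e(3) by blast
    then show "0 < weight (d - e)"
      using e_min d by (force simp: prime_weight_diff)
  qed
  ultimately show ?thesis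
    using e e_min unfolding S'_def by auto
qed

lemma laurent_nonzero_lead_term:
  assumes "h \<in> laurent P" "h \<noteq> 0"
  shows "\<exists>c e u. c \<in> F \<and> c \<noteq> 0 \<and> e \<in> int_vecs n \<and> P e \<and> u \<in> pos_laurent \<and>
    h = c * monom e * (1 + u)"
proof -
  obtain S C where S: "finite S" "\<forall>d\<in>S. d \<in> int_vecs n \<and> P d \<and> C d \<in> F"
    "h = (\<Sum>d\<in>S. C d * monom d)"
    using assms(1) by (rule laurentE)
  have "\<exists>d0\<in>S. C d0 \<noteq> 0"
  proof (rule ccontr)
    assume "\<not> (\<exists>d0\<in>S. C d0 \<noteq> 0)"
    then have "h = 0"
      using S(3) by simp
    with assms(2) show False ..
  qed
  then obtain e u where "e \<in> S" "C e \<noteq> 0" "u \<in> pos_laurent" "h = C e * monom e * (1 + u)"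
    using laurent_lead_term[of S C] S by blast
  then show ?thesis
    using S(2) by blast
qed

lemma lead_exp_weight_le:
  assumes "c \<in> F" "c \<noteq> 0" "c' \<in> F" "e \<in> int_vecs n" "e' \<in> int_vecs n"
    and "u \<in> pos_laurent" "u' \<in> pos_laurent"
    and eq: "c * monom e * (1 + u) = c' * monom e' * (1 + u')"
  shows "weight e' \<le> weight e"
proof (rule ccontr)
  assume "\<not> weight e' \<le> weight e"
  define w where "w = u - (c' / c) * monom (e' - e) * (1 + u')"
  have "monom e * (c * (1 + u)) = monom e * (c' * monom (e' - e) * (1 + u'))"
    using eq by (simp add: monom_diff mult.assoc mult.left_commute)
  then have "c * (1 + u) = c' * monom (e' - e) * (1 + u')"
    by simp
  moreover have "c * (1 + w) = c * (1 + u) - c' * monom (e' - e) * (1 + u')"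
    unfolding w_def using assms(2) by (simp add: field_simps)
  ultimately have "1 + w = 0"
    using assms(2) by simp
  moreover have "(c' / c) * monom (e' - e) \<in> pos_laurent"
    using assms \<open>\<not> weight e' \<le> weight e\<close> by (intro laurent_monom) (auto simp: prime_weight_diff)
  then have "(c' / c) * monom (e' - e) * (1 + u') \<in> pos_laurent"
    using one_plus_pos_laurent[OF assms(7)] by (rule laurent_mult) (auto simp: prime_weight_add)
  then have "w \<in> pos_laurent"
    unfolding w_def using assms(6) by (rule laurent_diff[rotated])
  ultimately show False
    using one_plus_pos_laurent_nonzero by blast
qed

lemma lead_exp_unique:
  assumes "c \<in> F" "c \<noteq> 0" "c' \<in> F" "c' \<noteq> 0" "e \<in> int_vecs n" "e' \<in> int_vecs n"
    and "u \<in> pos_laurent" "u' \<in> pos_laurent"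
    and "c * monom e * (1 + u) = c' * monom e' * (1 + u')"
  shows "e = e'"
proof -
  have "weight e' \<le> weight e" "weight e \<le> weight e'"
    using lead_exp_weight_le[of c c' e e' u u'] lead_exp_weight_le[of c' c e' e u' u] assms
    by simp_all
  then show ?thesis
    using assms(5,6) prime_weight_inj by force
qed

section \<open>Valuations\<close>

text \<open>Instead of embedding K into a field of Laurent series, the elements of valuation > M
  (resp. \<ge> M) are described directly as quotients T / (1 + v); 1 / (1 + v) is the
  geometric series in - v.\<close>

definition val_gt :: "real \<Rightarrow> 'a set" where
  "val_gt M = {T / (1 + v) | T v. T \<in> laurent (\<lambda>d. M < weight d) \<and> v \<in> pos_laurent}"

definition val_ge :: "real \<Rightarrow> 'a set" where
  "val_ge M = {T / (1 + v) | T v. T \<in> laurent (\<lambda>d. M \<le> weight d) \<and> v \<in> pos_laurent}"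

lemma val_gt_laurent: "T \<in> laurent (\<lambda>d. M < weight d) \<Longrightarrow> T \<in> val_gt M"
  unfolding val_gt_def by (intro CollectI exI[of _ T] exI[of _ 0]) simp

lemma val_ge_laurent: "T \<in> laurent (\<lambda>d. M \<le> weight d) \<Longrightarrow> T \<in> val_ge M"
  unfolding val_ge_def by (intro CollectI exI[of _ T] exI[of _ 0]) simp

lemma val_gt_add:
  assumes "h1 \<in> val_gt M" "h2 \<in> val_gt M" shows "h1 + h2 \<in> val_gt M"
proof -
  obtain T1 v1 where 1: "T1 \<in> laurent (\<lambda>d. M < weight d)" "v1 \<in> pos_laurent" "h1 = T1 / (1 + v1)"
    using assms(1) unfolding val_gt_def by blast
  obtain T2 v2 where 2: "T2 \<in> laurent (\<lambda>d. M < weight d)" "v2 \<in> pos_laurent" "h2 = T2 / (1 + v2)"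
    using assms(2) unfolding val_gt_def by blast
  obtain w where w: "w \<in> pos_laurent" "(1 + v1) * (1 + v2) = 1 + w"
    using pos_laurent_mult_one_plus[OF 1(2) 2(2)] by blast
  have "h1 + h2 = (T1 * (1 + v2) + T2 * (1 + v1)) / (1 + w)"
    using one_plus_pos_laurent_nonzero[OF 1(2)] one_plus_pos_laurent_nonzero[OF 2(2)]
    unfolding 1(3) 2(3) w(2)[symmetric] by (simp add: field_simps)
  moreover have "T1 * (1 + v2) + T2 * (1 + v1) \<in> laurent (\<lambda>d. M < weight d)"
    by (intro laurent_add laurent_mult[OF 1(1) one_plus_pos_laurent[OF 2(2)]]
        laurent_mult[OF 2(1) one_plus_pos_laurent[OF 1(2)]]) (auto simp: prime_weight_add)
  ultimately show ?thesis
    using w(1) unfolding val_gt_def by blast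
qed

lemma val_gt_smult:
  assumes "h \<in> val_gt M" "c \<in> F" shows "c * h \<in> val_gt M"
proof -
  obtain T v where "T \<in> laurent (\<lambda>d. M < weight d)" "v \<in> pos_laurent" "h = T / (1 + v)"
    using assms(1) unfolding val_gt_def by blast
  moreover have "c * T \<in> laurent (\<lambda>d. M < weight d)"
    using calculation(1) assms(2) by (rule laurent_smult)
  ultimately show ?thesis
    unfolding val_gt_def by fastforce
qed

lemma val_gt_uminus: "h \<in> val_gt M \<Longrightarrow> - h \<in> val_gt M"
  using val_gt_smult[of h M "-1"] uminus_in_F[OF one_in_F] by simp

lemma val_gt_diff: "h1 \<in> val_gt M \<Longrightarrow> h2 \<in> val_gt M \<Longrightarrow> h1 - h2 \<in> val_gt M"
  using val_gt_add[of h1 M "- h2"] val_gt_uminus by simp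

text \<open>Compare the leading term of h with that of the numerator T = h (1 + v).\<close>

lemma laurent_val_gt_0_weight_pos:
  assumes S: "finite S" "\<forall>d\<in>S. d \<in> int_vecs n \<and> C d \<in> F"
    and pos: "(\<Sum>d\<in>S. C d * monom d) \<in> val_gt 0" and "d0 \<in> S" "C d0 \<noteq> 0"
  shows "0 < weight d0"
proof (rule ccontr)
  assume "\<not> 0 < weight d0"
  obtain e u where e: "e \<in> S" "C e \<noteq> 0" "weight e \<le> weight d0" "u \<in> pos_laurent"
    "(\<Sum>d\<in>S. C d * monom d) = C e * monom e * (1 + u)"
    using laurent_lead_term[OF S \<open>d0 \<in> S\<close> \<open>C d0 \<noteq> 0\<close>] \<open>d0 \<in> S\<close> \<open>C d0 \<noteq> 0\<close> by blast
  obtain T v where Tv: "T \<in> pos_laurent" "v \<in> pos_laurent" "(\<Sum>d\<in>S. C d * monom d) = T / (1 + v)"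
    using pos unfolding val_gt_def by blast
  obtain w where w: "w \<in> pos_laurent" "(1 + u) * (1 + v) = 1 + w"
    using pos_laurent_mult_one_plus[OF e(4) Tv(2)] by blast
  have T: "T = C e * monom e * (1 + w)"
    using Tv(3) e(5) one_plus_pos_laurent_nonzero[OF Tv(2)] unfolding w(2)[symmetric]
    by (simp add: field_simps)
  then have "T \<noteq> 0"
    using e(2) one_plus_pos_laurent_nonzero[OF w(1)] by simp
  then obtain c' e' u' where lead: "c' \<in> F" "c' \<noteq> 0" "e' \<in> int_vecs n" "0 < weight e'"
    "u' \<in> pos_laurent" "T = c' * monom e' * (1 + u')"
    using laurent_nonzero_lead_term[OF Tv(1)] by blast
  have "e = e'"
    using lead_exp_unique[of "C e" c' e e' w u'] e S lead T w(1) by auto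
  then show False
    using e(3) \<open>\<not> 0 < weight d0\<close> lead(4) by simp
qed

lemma const_plus_nonconst_val_gt_0:
  assumes "c \<in> F" "Q \<in> laurent (\<lambda>d. d \<noteq> 0)" "c + Q \<in> val_gt 0"
  shows "c = 0"
proof -
  obtain S C where S: "finite S" "\<forall>d\<in>S. d \<in> int_vecs n \<and> d \<noteq> 0 \<and> C d \<in> F"
    "Q = (\<Sum>d\<in>S. C d * monom d)"
    using assms(2) by (rule laurentE)
  have "0 \<notin> S"
    using S by auto
  then have "c + Q = (\<Sum>d\<in>insert 0 S. (C(0 := c)) d * monom d)"
    using S(1,3) by (simp add: sum.insert) (intro sum.cong refl, auto)
  moreover have "\<forall>d\<in>insert 0 S. d \<in> int_vecs n \<and> (C(0 := c)) d \<in> F"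
    using S(2) assms(1) by auto
  ultimately show "c = 0"
    using laurent_val_gt_0_weight_pos[of "insert 0 S" "C(0 := c)" 0] assms(3) S(1) by force
qed

definition principal_units :: "'a set" where
  "principal_units = {(1 + u) / (1 + v) | u v. u \<in> pos_laurent \<and> v \<in> pos_laurent}"

lemma principal_units_nonzero: "g \<in> principal_units \<Longrightarrow> g \<noteq> 0"
  unfolding principal_units_def using one_plus_pos_laurent_nonzero by auto

lemma nonzero_decomposition:
  assumes "f \<noteq> 0"
  shows "\<exists>c e g. c \<in> F \<and> c \<noteq> 0 \<and> e \<in> int_vecs n \<and> g \<in> principal_units \<and> f = c * monom e * g"
proof -
  obtain P R where PR: "P \<in> laurent (\<lambda>_. True)" "R \<in> laurent (\<lambda>_. True)" "R \<noteq> 0" "f = P / R"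
    using quotient_of_laurent by blast
  then have "P \<noteq> 0"
    using assms by auto
  then obtain c1 e1 u1 where 1: "c1 \<in> F" "c1 \<noteq> 0" "e1 \<in> int_vecs n" "u1 \<in> pos_laurent"
    "P = c1 * monom e1 * (1 + u1)"
    using laurent_nonzero_lead_term[OF PR(1)] by blast
  obtain c2 e2 u2 where 2: "c2 \<in> F" "c2 \<noteq> 0" "e2 \<in> int_vecs n" "u2 \<in> pos_laurent"
    "R = c2 * monom e2 * (1 + u2)"
    using laurent_nonzero_lead_term[OF PR(2,3)] by blast
  have "f = (c1 * monom e1 * (1 + u1)) / (c2 * monom e2 * (1 + u2))"
    using PR(4) 1(5) 2(5) by simp
  also have "\<dots> = (c1 / c2) * monom (e1 - e2) * ((1 + u1) / (1 + u2))"
    using 2(2) one_plus_pos_laurent_nonzero[OF 2(4)] by (simp add: monom_diff field_simps)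
  finally have "f = (c1 / c2) * monom (e1 - e2) * ((1 + u1) / (1 + u2))" .
  moreover have "(1 + u1) / (1 + u2) \<in> principal_units"
    unfolding principal_units_def using 1 2 by blast
  moreover have "c1 / c2 \<in> F" "c1 / c2 \<noteq> 0" "e1 - e2 \<in> int_vecs n"
    using 1 2 by auto
  ultimately show ?thesis
    by blast
qed

section \<open>Log-brackets and constant matrices\<close>

lemma monom_in_laurent: "e \<in> int_vecs n \<Longrightarrow> monom e \<in> laurent (\<lambda>d. d = e)"
  using laurent_monom[of 1 e "\<lambda>d. d = e"] by simp

lemma logbr_monom_one_plus:
  assumes "e \<in> int_vecs n" "u \<in> pos_laurent"
  shows "logbr (monom e) (1 + u) \<in> val_gt 0"
proof -
  have "br (monom e) (1 + u) = br (monom e) u"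
    using br_antisym[of "monom e" 1] by (simp add: br_add_right br_const_left)
  then have "logbr (monom e) (1 + u) = (monom (- e) * br (monom e) u) / (1 + u)"
    unfolding logbr_def monom_uminus by (simp add: divide_inverse mult.commute)
  moreover have "br (monom e) u \<in> laurent (\<lambda>d. weight e < weight d)"
    by (rule laurent_br[OF monom_in_laurent[OF assms(1)] assms(2)]) (simp add: prime_weight_add)
  then have "monom (- e) * br (monom e) u \<in> pos_laurent"
    using monom_in_laurent[of "- e"] assms(1)
    by (intro laurent_mult[of "monom (- e)" "\<lambda>d. d = - e" "br (monom e) u" "\<lambda>d. weight e < weight d"])
      (auto simp: prime_weight_diff)
  ultimately show ?thesis
    using assms(2) unfolding val_gt_def by blast
qed

lemma logbr_one_plus_one_plus:
  assumes "u \<in> pos_laurent" "v \<in> pos_laurent"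
  shows "logbr (1 + u) (1 + v) \<in> val_gt 0"
proof -
  obtain w where w: "w \<in> pos_laurent" "(1 + u) * (1 + v) = 1 + w"
    using pos_laurent_mult_one_plus[OF assms] by blast
  have "br (1 + u) (1 + v) = br u v"
    using br_antisym[of u 1] by (simp add: br_add_left br_add_right br_const_left)
  then have "logbr (1 + u) (1 + v) = br u v / (1 + w)"
    unfolding logbr_def w(2) by simp
  moreover have "br u v \<in> pos_laurent"
    using assms by (rule laurent_br) (simp add: prime_weight_add)
  ultimately show ?thesis
    using w(1) unfolding val_gt_def by blast
qed

lemma logbr_monom_principal_unit:
  assumes "e \<in> int_vecs n" "g \<in> principal_units"
  shows "logbr (monom e) g \<in> val_gt 0"
proof -
  obtain u v where uv: "u \<in> pos_laurent" "v \<in> pos_laurent" "g = (1 + u) / (1 + v)"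
    using assms(2) unfolding principal_units_def by blast
  then have "logbr (monom e) g = logbr (monom e) (1 + u) - logbr (monom e) (1 + v)"
    using one_plus_pos_laurent_nonzero[OF uv(1)] one_plus_pos_laurent_nonzero[OF uv(2)]
    by (simp add: logbr_divide_right)
  then show ?thesis
    using assms(1) uv by (simp add: val_gt_diff logbr_monom_one_plus)
qed

lemma logbr_principal_units:
  assumes "g \<in> principal_units" "g' \<in> principal_units"
  shows "logbr g g' \<in> val_gt 0"
proof -
  have one_plus: "logbr (1 + u) g' \<in> val_gt 0" if "u \<in> pos_laurent" for u
  proof -
    obtain u' v' where uv': "u' \<in> pos_laurent" "v' \<in> pos_laurent" "g' = (1 + u') / (1 + v')"
      using assms(2) unfolding principal_units_def by blast
    then have "logbr (1 + u) g' = logbr (1 + u) (1 + u') - logbr (1 + u) (1 + v')"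
      using one_plus_pos_laurent_nonzero[OF uv'(1)] one_plus_pos_laurent_nonzero[OF uv'(2)]
        one_plus_pos_laurent_nonzero[OF that] by (simp add: logbr_divide_right)
    then show ?thesis
      using that uv' by (simp add: val_gt_diff logbr_one_plus_one_plus)
  qed
  obtain u v where uv: "u \<in> pos_laurent" "v \<in> pos_laurent" "g = (1 + u) / (1 + v)"
    using assms(1) unfolding principal_units_def by blast
  then have "logbr g g' = logbr (1 + u) g' - logbr (1 + v) g'"
    using one_plus_pos_laurent_nonzero[OF uv(1)] one_plus_pos_laurent_nonzero[OF uv(2)]
      principal_units_nonzero[OF assms(2)] by (simp add: logbr_divide_left)
  then show ?thesis
    using uv by (simp add: val_gt_diff one_plus)
qed

lemma logbr_decomposition:
  assumes "c \<in> F" "c \<noteq> 0" "c' \<in> F" "c' \<noteq> 0" "e \<in> int_vecs n" "e' \<in> int_vecs n"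
    and "g \<in> principal_units" "g' \<in> principal_units"
  shows "logbr (c * monom e * g) (c' * monom e' * g') - lam_form e e' \<in> val_gt 0"
proof -
  let ?y' = "c' * monom e' * g'"
  have nonzero: "g \<noteq> 0" "g' \<noteq> 0" "?y' \<noteq> 0"
    using assms principal_units_nonzero by auto
  have "logbr (c * monom e * g) ?y' = logbr c ?y' + logbr (monom e) ?y' + logbr g ?y'"
    using assms(2) nonzero by (simp add: logbr_mult_left)
  also have "logbr (monom e) ?y' = logbr (monom e) c' + lam_form e e' + logbr (monom e) g'"
    using assms(4) nonzero by (simp add: logbr_mult_right logbr_monom)
  also have "logbr g ?y' = logbr g c' - logbr (monom e') g + logbr g g'"
    using assms(4) nonzero by (simp add: logbr_mult_right logbr_antisym[of g "monom e'"])
  finally have "logbr (c * monom e * g) ?y' - lam_form e e' =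
      logbr (monom e) g' + (- logbr (monom e') g + logbr g g')"
    using assms(1,3) by (simp add: logbr_const_left logbr_const_right)
  also have "\<dots> \<in> val_gt 0"
    using assms by (intro val_gt_add val_gt_uminus logbr_monom_principal_unit logbr_principal_units)
  finally show ?thesis .
qed

lemma congr_int_eq_lam_form: "i < n \<Longrightarrow> j < n \<Longrightarrow> congr_int n A lam i j = lam_form (A i) (A j)"
  unfolding congr_int_def lam_form_def by simp

lemma C_mat_eq_logbr: "i < n \<Longrightarrow> j < n \<Longrightarrow> C_mat n br y i j = logbr (y i) (y j)"
  unfolding C_mat_def logbr_def by simp

lemma congr_int_in_C_set: "congr_int n A lam \<in> C_set n br"
proof -
  have "C_mat n br (\<lambda>i. monom (A i)) = congr_int n A lam"
  proof (intro ext)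
    fix i j
    show "C_mat n br (\<lambda>i. monom (A i)) i j = congr_int n A lam i j"
    proof (cases "i < n \<and> j < n")
      case True
      then show ?thesis
        by (simp add: C_mat_eq_logbr congr_int_eq_lam_form logbr_monom)
    qed (auto simp: C_mat_def congr_int_def)
  qed
  then show ?thesis
    unfolding C_set_def by (intro CollectI exI[of _ "\<lambda>i. monom (A i)"]) simp
qed

lemma val_gt_0_in_F: "c \<in> F \<Longrightarrow> c \<in> val_gt 0 \<Longrightarrow> c = 0"
  using const_plus_nonconst_val_gt_0[of c 0] by simp

lemma C_set_in_F_imp_congr_int:
  assumes "M \<in> C_set n br" "\<forall>i j. M i j \<in> F"
  shows "\<exists>A. M = congr_int n A lam"
proof -
  obtain y where y: "M = C_mat n br y" "\<forall>i<n. y i \<noteq> 0"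
    using assms(1) unfolding C_set_def by blast
  then have "\<forall>i. \<exists>c e g. i < n \<longrightarrow>
      c \<in> F \<and> c \<noteq> 0 \<and> e \<in> int_vecs n \<and> g \<in> principal_units \<and> y i = c * monom e * g"
    using nonzero_decomposition by blast
  then obtain c e g where dec: "\<And>i. i < n \<Longrightarrow>
      c i \<in> F \<and> c i \<noteq> 0 \<and> e i \<in> int_vecs n \<and> g i \<in> principal_units \<and> y i = c i * monom (e i) * g i"
    by metis
  have "M i j = congr_int n e lam i j" if "i < n" "j < n" for i j
  proof -
    have "M i j = logbr (y i) (y j)"
      using that y(1) by (simp add: C_mat_eq_logbr)
    then have "M i j - lam_form (e i) (e j) \<in> val_gt 0"
      using logbr_decomposition[of "c i" "c j" "e i" "e j" "g i" "g j"] dec[OF that(1)] dec[OF that(2)]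
      by simp
    moreover have "M i j - lam_form (e i) (e j) \<in> F"
      using assms(2) by blast
    ultimately show ?thesis
      using val_gt_0_in_F[of "M i j - lam_form (e i) (e j)"] that
      by (simp add: congr_int_eq_lam_form)
  qed
  then have "M = congr_int n e lam"
    using y(1) by (intro ext) (auto simp: C_mat_def congr_int_def)
  then show ?thesis
    by blast
qed

theorem C_set_inter_const:
  "C_set n br \<inter> {M. \<forall>i j. M i j \<in> F} = {congr_int n A lam | A. True}"
proof -
  have "congr_int n A lam i j \<in> F" for A i j
    unfolding congr_int_def using lam_in_F by (auto intro!: sum_in_F mult_in_F)
  then show ?thesis
    using congr_int_in_C_set C_set_in_F_imp_congr_int by auto
qed

section \<open>Approximation and the span of brackets\<close>

lemma laurent_bounded_below:
  assumes "h \<in> laurent P" shows "\<exists>b. h \<in> laurent (\<lambda>d. b \<le> weight d)"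
proof -
  obtain S C where S: "finite S" "\<forall>d\<in>S. d \<in> int_vecs n \<and> P d \<and> C d \<in> F"
    "h = (\<Sum>d\<in>S. C d * monom d)"
    using assms by (rule laurentE)
  have "h \<in> laurent (\<lambda>d. Min (insert 0 (weight ` S)) \<le> weight d)"
    unfolding S(3) using S(1,2) by (intro laurentI) auto
  then show ?thesis ..
qed

lemma pos_laurent_bounded_below:
  assumes "v \<in> pos_laurent" shows "\<exists>\<delta>>0. v \<in> laurent (\<lambda>d. \<delta> \<le> weight d)"
proof -
  obtain S C where S: "finite S" "\<forall>d\<in>S. d \<in> int_vecs n \<and> 0 < weight d \<and> C d \<in> F"
    "v = (\<Sum>d\<in>S. C d * monom d)"
    using assms by (rule laurentE)
  have "0 < Min (insert 1 (weight ` S))"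
    using S(1,2) by auto
  moreover have "v \<in> laurent (\<lambda>d. Min (insert 1 (weight ` S)) \<le> weight d)"
    unfolding S(3) using S(1,2) by (intro laurentI) auto
  ultimately show ?thesis
    by blast
qed

lemma laurent_power:
  assumes "h \<in> laurent (\<lambda>d. \<delta> \<le> weight d)"
  shows "h ^ N \<in> laurent (\<lambda>d. real N * \<delta> \<le> weight d)"
proof (induction N)
  case 0
  then show ?case
    by (simp add: laurent_one)
next
  case (Suc N)
  have "h * h ^ N \<in> laurent (\<lambda>d. real (Suc N) * \<delta> \<le> weight d)"
    using assms Suc by (rule laurent_mult) (simp add: prime_weight_add algebra_simps)
  then show ?case
    by simp
qed

lemma quotient_form:
  "\<exists>T v b. T \<in> laurent (\<lambda>d. b \<le> weight d) \<and> v \<in> pos_laurent \<and> f = T / (1 + v)"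
proof -
  obtain P R where PR: "P \<in> laurent (\<lambda>_. True)" "R \<in> laurent (\<lambda>_. True)" "R \<noteq> 0" "f = P / R"
    using quotient_of_laurent by blast
  obtain c e v where R: "c \<in> F" "c \<noteq> 0" "e \<in> int_vecs n" "v \<in> pos_laurent"
    "R = c * monom e * (1 + v)"
    using laurent_nonzero_lead_term[OF PR(2,3)] by blast
  have "(inverse c * monom (- e)) * P \<in> laurent (\<lambda>_. True)"
    using R by (intro laurent_mult[OF laurent_monom PR(1)]) auto
  then obtain b where "(inverse c * monom (- e)) * P \<in> laurent (\<lambda>d. b \<le> weight d)"
    using laurent_bounded_below by blast
  moreover have "f = ((inverse c * monom (- e)) * P) / (1 + v)"
    unfolding PR(4) R(5) using R(2) one_plus_pos_laurent_nonzero[OF R(4)]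
    by (simp add: monom_uminus field_simps)
  ultimately show ?thesis
    using R(4) by blast
qed

lemma ex_val_ge: "\<exists>b. f \<in> val_ge b"
  using quotient_form[of f] unfolding val_ge_def by blast

text \<open>Truncating the geometric series of 1/(1 + v) approximates every element by a Laurent
  polynomial up to arbitrarily high valuation; this uses that the weights are Archimedean.\<close>

lemma laurent_approx: "\<exists>P\<in>laurent (\<lambda>_. True). f - P \<in> val_gt M"
proof -
  obtain T v b where Tv: "T \<in> laurent (\<lambda>d. b \<le> weight d)" "v \<in> pos_laurent" "f = T / (1 + v)"
    using quotient_form by blast
  obtain \<delta> where \<delta>: "\<delta> > 0" "- v \<in> laurent (\<lambda>d. \<delta> \<le> weight d)"
    using pos_laurent_bounded_below[OF Tv(2)] laurent_uminus by blast
  obtain N where N: "M - b < real N * \<delta>"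
    using ex_less_of_nat_mult[OF \<delta>(1)] by blast
  define P where "P = T * (\<Sum>k<N. (- v) ^ k)"
  have "(- v) ^ k \<in> laurent (\<lambda>_. True)" for k
    using laurent_power[OF \<delta>(2)] by (rule laurent_mono) simp
  then have "P \<in> laurent (\<lambda>_. True)"
    unfolding P_def using Tv(1) by (intro laurent_mult[OF _ laurent_sum]) (auto elim: laurent_mono)
  moreover have "f - P = (T * (- v) ^ N) / (1 + v)"
  proof -
    have geom: "(1 + v) * (\<Sum>k<N. (- v) ^ k) = 1 - (- v) ^ N"
      using one_diff_power_eq[of "- v" N] by simp
    have "f - P = (T - T * ((1 + v) * (\<Sum>k<N. (- v) ^ k))) / (1 + v)"
      unfolding Tv(3) P_def using one_plus_pos_laurent_nonzero[OF Tv(2)] by (simp add: field_simps)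
    also have "\<dots> = (T * (- v) ^ N) / (1 + v)"
      unfolding geom by (simp add: right_diff_distrib)
    finally show ?thesis .
  qed
  moreover have "T * (- v) ^ N \<in> laurent (\<lambda>d. M < weight d)"
    using Tv(1) laurent_power[OF \<delta>(2), of N] by (rule laurent_mult) (use N in \<open>simp add: prime_weight_add\<close>)
  ultimately show ?thesis
    using Tv(2) unfolding val_gt_def by blast
qed

lemma laurent_mult_weight_gt:
  "h1 \<in> laurent (\<lambda>d. a \<le> weight d) \<Longrightarrow> h2 \<in> laurent (\<lambda>d. b < weight d) \<Longrightarrow>
    h1 * h2 \<in> laurent (\<lambda>d. a + b < weight d)"
  by (rule laurent_mult[of h1 "\<lambda>d. a \<le> weight d" h2 "\<lambda>d. b < weight d"])
    (auto simp: prime_weight_add)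

lemma br_val_gt_val_ge:
  assumes "h1 \<in> val_gt a" "h2 \<in> val_ge b" shows "br h1 h2 \<in> val_gt (a + b)"
proof -
  obtain T1 v1 where 1: "T1 \<in> laurent (\<lambda>d. a < weight d)" "v1 \<in> pos_laurent" "h1 = T1 / (1 + v1)"
    using assms(1) unfolding val_gt_def by blast
  obtain T2 v2 where 2: "T2 \<in> laurent (\<lambda>d. b \<le> weight d)" "v2 \<in> pos_laurent" "h2 = T2 / (1 + v2)"
    using assms(2) unfolding val_ge_def by blast
  let ?S1 = "1 + v1" and ?S2 = "1 + v2"
  have S: "?S1 \<in> laurent (\<lambda>d. 0 \<le> weight d)" "?S2 \<in> laurent (\<lambda>d. 0 \<le> weight d)"
    using 1 2 by (auto intro: one_plus_pos_laurent)
  have br_S: "br T1 ?S2 = br T1 v2" "br ?S1 T2 = br v1 T2" "br ?S1 ?S2 = br v1 v2"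
    using br_antisym[of T1 1] br_antisym[of v1 1]
    by (simp_all add: br_add_left br_add_right br_const_left)
  obtain w where w: "w \<in> pos_laurent" "?S1\<^sup>2 * ?S2\<^sup>2 = 1 + w"
    using pos_laurent_mult_one_plus 1(2) 2(2) unfolding power2_eq_square by metis
  have "br h1 h2 = (?S1 * ?S2 * br T1 T2 - ?S1 * T2 * br T1 v2 - T1 * ?S2 * br v1 T2
      + T1 * T2 * br v1 v2) / (1 + w)"
    unfolding 1(3) 2(3) br_divide_divide[OF one_plus_pos_laurent_nonzero[OF 1(2)]
      one_plus_pos_laurent_nonzero[OF 2(2)]] br_S w(2) ..
  moreover have "?S1 * ?S2 * br T1 T2 - ?S1 * T2 * br T1 v2 - T1 * ?S2 * br v1 T2
      + T1 * T2 * br v1 v2 \<in> laurent (\<lambda>d. a + b < weight d)"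
  proof -
    have T1: "T1 \<in> laurent (\<lambda>d. a \<le> weight d)"
      using 1(1) by (rule laurent_mono) simp
    have "br T1 T2 \<in> laurent (\<lambda>d. a + b < weight d)" "br T1 v2 \<in> laurent (\<lambda>d. a < weight d)"
      "br v1 T2 \<in> laurent (\<lambda>d. b < weight d)" "br v1 v2 \<in> pos_laurent"
      using 1 2 by (auto intro!: laurent_br simp: prime_weight_add)
    then have "?S1 * (?S2 * br T1 T2) \<in> laurent (\<lambda>d. a + b < weight d)"
      "?S1 * (T2 * br T1 v2) \<in> laurent (\<lambda>d. a + b < weight d)"
      "T1 * (?S2 * br v1 T2) \<in> laurent (\<lambda>d. a + b < weight d)"
      "T1 * (T2 * br v1 v2) \<in> laurent (\<lambda>d. a + b < weight d)"
      using laurent_mult_weight_gt[OF S(1)] laurent_mult_weight_gt[OF S(2)] laurent_mult_weight_gt[OF T1]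
        laurent_mult_weight_gt[OF 2(1)] by (fastforce simp: add.commute)+
    then show ?thesis
      by (intro laurent_add laurent_diff) (simp_all add: mult.assoc)
  qed
  ultimately show ?thesis
    using w(1) unfolding val_gt_def by blast
qed

lemma val_gt_sum: "(\<And>i. i \<in> I \<Longrightarrow> f i \<in> val_gt M) \<Longrightarrow> sum f I \<in> val_gt M"
  by (induction I rule: infinite_finite_induct) (auto intro: val_gt_add val_gt_laurent)

text \<open>Up to positive valuation a bracket is a bracket of Laurent polynomials, which has no
  constant term because lam_form d (- d) = 0.\<close>

lemma br_approx_nonconst: "\<exists>Q\<in>laurent (\<lambda>d. d \<noteq> 0). br f g - Q \<in> val_gt 0"
proof -
  obtain b where b: "g \<in> val_ge b"
    using ex_val_ge by blast
  obtain P where P: "P \<in> laurent (\<lambda>_. True)" "f - P \<in> val_gt (- b)"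
    using laurent_approx by blast
  obtain b' where b': "P \<in> laurent (\<lambda>d. b' \<le> weight d)"
    using laurent_bounded_below[OF P(1)] by blast
  obtain Q where Q: "Q \<in> laurent (\<lambda>_. True)" "g - Q \<in> val_gt (- b')"
    using laurent_approx by blast
  have "br f g - br P Q = br (f - P) g - br (g - Q) P"
    using br_antisym[of Q P] br_antisym[of g P] by (simp add: br_diff_left)
  also have "\<dots> \<in> val_gt 0"
    using br_val_gt_val_ge[OF P(2) b] br_val_gt_val_ge[OF Q(2) val_ge_laurent[OF b']]
    by (simp add: val_gt_diff)
  finally have "br f g - br P Q \<in> val_gt 0" .
  moreover have "br P Q \<in> laurent (\<lambda>d. d \<noteq> 0)"
  proof (rule laurent_br[OF P(1) Q(1)])
    fix d e :: "nat \<Rightarrow> int" assume "lam_form d e \<noteq> 0"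
    then show "d + e \<noteq> 0"
    proof (rule contrapos_nn)
      assume "d + e = 0"
      then have "e = - d"
        by (simp add: eq_neg_iff_add_eq_0 add.commute)
      then show "lam_form d e = 0"
        by (simp add: lam_form_uminus_right lam_form_self)
    qed
  qed
  ultimately show ?thesis
    by blast
qed

theorem bracket_span_inter_const: "bracket_span F br \<inter> F = {0}"
proof (intro equalityI subsetI)
  fix h assume "h \<in> bracket_span F br \<inter> F"
  then obtain m :: nat and c f g where h: "h = (\<Sum>i<m. c i * br (f i) (g i))" "\<forall>i<m. c i \<in> F"
    and "h \<in> F"
    unfolding bracket_span_def by blast
  have "\<forall>i. \<exists>Q. Q \<in> laurent (\<lambda>d. d \<noteq> 0) \<and> br (f i) (g i) - Q \<in> val_gt 0"
    using br_approx_nonconst by blast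
  then obtain Q where Q: "\<forall>i. Q i \<in> laurent (\<lambda>d. d \<noteq> 0) \<and> br (f i) (g i) - Q i \<in> val_gt 0"
    by (auto dest: choice)
  have "h - (\<Sum>i<m. c i * Q i) = (\<Sum>i<m. c i * (br (f i) (g i) - Q i))"
    unfolding h(1) by (simp add: sum_subtractf right_diff_distrib)
  also have "\<dots> \<in> val_gt 0"
    using Q h(2) by (intro val_gt_sum val_gt_smult) auto
  finally have "h + - (\<Sum>i<m. c i * Q i) \<in> val_gt 0"
    by simp
  moreover have "- (\<Sum>i<m. c i * Q i) \<in> laurent (\<lambda>d. d \<noteq> 0)"
    using Q h(2) by (intro laurent_uminus laurent_sum laurent_smult) auto
  ultimately show "h \<in> {0}"
    using const_plus_nonconst_val_gt_0 \<open>h \<in> F\<close> by blast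
qed (auto simp: bracket_span_def intro!: exI[of _ "0::nat"])

end

theorem proposition5p2:
  fixes F :: "'a::field_char_0 set" and n :: nat and lam :: "nat \<Rightarrow> nat \<Rightarrow> 'a"
    and x :: "nat \<Rightarrow> 'a" and br :: "'a \<Rightarrow> 'a \<Rightarrow> 'a"
  assumes lamF: "\<forall>i<n. \<forall>j<n. lam i j \<in> F"
    and antisym: "\<forall>i<n. \<forall>j<n. lam j i = - lam i j"
    and K: "is_quantum_torus_bracket F n lam x br"
  shows "bracket_span F br \<inter> F = {0} \<and>
    C_set n br \<inter> {M. \<forall>i j. M i j \<in> F} = {congr_int n A lam | A. True}"
proof -
  interpret quantum_torus F n lam x br
    using assms by unfold_locales
  show ?thesis
    using bracket_span_inter_const C_set_inter_const by simp
qed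

end
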